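(* Let $r>5$ with $r\not\equiv 0\pmod 3$, and let $C_r$ be the directed cycle of length $r$. If some type-A prime divides $r$, then $\chi^*_o(C_r)\leq 4-\beta(r)$.
   Context: The directed cycle $C_r$ has vertices $u_i$, $i\in\mathbb{Z}/r\mathbb{Z}$, and arcs $u_iu_{i+1}$. For a set $S$ of $k$ colors, a $b$-fold oriented $k$-coloring of an oriented graph $G$ is a map $f$ from $V(G)$ to the $b$-element subsets of $S$ such that (i) $f(x)\cap f(y)=\emptyset$ for every arc $xy$, and (ii) for all arcs $xy, zw$, $f(x)\cap f(w)\neq\emptyset$ implies $f(y)\cap f(z)=\emptyset$. $\chi^b_o(G)$ is the minimum such $k$, and $\chi^*_o(G)=\lim_{b\to\infty}\chi^b_o(G)/b=\inf_{b\ge1}\chi^b_o(G)/b$. A prime $p>3$ is type-A if $p\equiv 3\pmod 4$. For $r>5$: $\beta(r)=0$ if $r$ has no type-A prime factor, and otherwise $\beta(r)=\frac{4}{p+1}$ where $p$ is the least type-A prime factor of $r$. *)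

theory Defs
  imports Complex_Main "HOL-Computational_Algebra.Primes"
begin

definition cycle_V :: "nat \<Rightarrow> nat set" where
  "cycle_V r = {..<r}"

definition cycle_A :: "nat \<Rightarrow> (nat \<times> nat) set" where
  "cycle_A r = {(i, (i + 1) mod r) | i. i < r}"

definition oriented_coloring ::
  "'a set \<Rightarrow> ('a \<times> 'a) set \<Rightarrow> nat \<Rightarrow> nat \<Rightarrow> ('a \<Rightarrow> nat set) \<Rightarrow> bool" where
  "oriented_coloring V A b k f \<longleftrightarrow>
     (\<forall>x\<in>V. f x \<subseteq> {..<k} \<and> card (f x) = b) \<and>
     (\<forall>(x, y)\<in>A. f x \<inter> f y = {}) \<and>
     (\<forall>(x, y)\<in>A. \<forall>(z, w)\<in>A. f x \<inter> f w \<noteq> {} \<longrightarrow> f y \<inter> f z = {})"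

definition chi_b :: "'a set \<Rightarrow> ('a \<times> 'a) set \<Rightarrow> nat \<Rightarrow> nat" where
  "chi_b V A b = Inf {k. \<exists>f. oriented_coloring V A b k f}"

definition chi_star :: "'a set \<Rightarrow> ('a \<times> 'a) set \<Rightarrow> real" where
  "chi_star V A = (INF b\<in>{1::nat..}. real (chi_b V A b) / real b)"

definition typeA :: "nat \<Rightarrow> bool" where
  "typeA p \<longleftrightarrow> prime p \<and> p > 3 \<and> p mod 4 = 3"

definition beta :: "nat \<Rightarrow> real" where
  "beta r = (if \<exists>p. typeA p \<and> p dvd r
             then 4 / (real (LEAST p. typeA p \<and> p dvd r) + 1) else 0)"

end

theory Submission
  imports Defs "HOL-Number_Theory.Cong"
begin

text \<open>Let p be a type-A prime dividing r and b = (p + 1)/4. Colour the vertex x of the cycle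
  by the block of b consecutive residues xb, ..., xb + b - 1 modulo p; since p divides r this
  respects x mod r. Two blocks meet only if their offsets differ by some t with |t| < b
  modulo p. Consecutive blocks have offset difference b, so arcs get disjoint colour sets; and
  if both u_x, u_(y+1) and u_(x+1), u_y shared colours, subtracting the two differences would
  give 2b = t (mod p) with |t| \<le> 2b - 2, impossible since 4b - 2 < p. This b-fold oriented
  p-colouring gives chi*(C_r) \<le> p/b = 4 - 4/(p + 1).\<close>

definition block_coloring :: "nat \<Rightarrow> nat \<Rightarrow> nat \<Rightarrow> nat set" where
  "block_coloring p b x = (\<lambda>j. (x * b + j) mod p) ` {..<b}"

lemma card_block_coloring:
  assumes "b \<le> p"
  shows "card (block_coloring p b x) = b"
proof -
  have "inj_on (\<lambda>j. (x * b + j) mod p) {..<b}"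
  proof (rule inj_onI)
    fix i j assume "i \<in> {..<b}" "j \<in> {..<b}" and "(x * b + i) mod p = (x * b + j) mod p"
    then have "[i = j] (mod p)" and "i < p" "j < p"
      using assms by (auto simp: cong_def[symmetric] cong_add_lcancel_nat)
    then show "i = j" by (simp add: cong_def)
  qed
  then show ?thesis unfolding block_coloring_def by (simp add: card_image)
qed

lemma block_coloring_subset: "b \<le> p \<Longrightarrow> block_coloring p b x \<subseteq> {..<p}"
  unfolding block_coloring_def by auto

lemma block_coloring_mod:
  assumes "p dvd r"
  shows "block_coloring p b (x mod r) = block_coloring p b x"
proof -
  have "[x mod r = x] (mod p)"
    using assms by (simp add: cong_def mod_mod_cancel)
  then have "[x mod r * b + j = x * b + j] (mod p)" for j
    by (intro cong_add cong_mult) auto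
  then show ?thesis unfolding block_coloring_def cong_def by simp
qed

lemma block_coloring_meet:
  assumes "block_coloring p b x \<inter> block_coloring p b y \<noteq> {}"
  obtains t :: int where "\<bar>t\<bar> < int b" and "int p dvd (int x - int y) * int b - t"
proof -
  obtain i j where ij: "i < b" "j < b" and "(x * b + i) mod p = (y * b + j) mod p"
    using assms unfolding block_coloring_def by auto
  then have "int p dvd int (x * b + i) - int (y * b + j)"
    by (metis mod_eq_dvd_iff of_nat_mod)
  then have "int p dvd (int x - int y) * int b - (int j - int i)"
    by (simp add: algebra_simps)
  moreover have "\<bar>int j - int i\<bar> < int b" using ij by linarith
  ultimately show ?thesis using that by blast
qed

lemma block_coloring_adjacent_disjoint:
  assumes "2 * b \<le> p"
  shows "block_coloring p b x \<inter> block_coloring p b (x + 1) = {}"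
proof (rule ccontr)
  assume "block_coloring p b x \<inter> block_coloring p b (x + 1) \<noteq> {}"
  then have "block_coloring p b (x + 1) \<inter> block_coloring p b x \<noteq> {}"
    by (simp add: Int_commute)
  then obtain t where t: "\<bar>t\<bar> < int b" and "int p dvd int b - t"
    by (rule block_coloring_meet) simp
  then have "int p \<le> int b - t" by (intro zdvd_imp_le) auto
  then show False using t assms by linarith
qed

lemma block_coloring_oriented:
  assumes "4 * b \<le> p + 1"
  shows "block_coloring p b x \<inter> block_coloring p b (y + 1) = {}
    \<or> block_coloring p b (x + 1) \<inter> block_coloring p b y = {}"
proof (rule ccontr)
  assume "\<not> ?thesis"
  then obtain s t where s: "\<bar>s\<bar> < int b" "int p dvd (int x - int (y + 1)) * int b - s"
    and t: "\<bar>t\<bar> < int b" "int p dvd (int (x + 1) - int y) * int b - t"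
    by (meson block_coloring_meet)
  have "int p dvd 2 * int b - t + s"
    using dvd_diff[OF t(2) s(2)] by (simp add: algebra_simps)
  then have "int p \<le> 2 * int b - t + s" using s t by (intro zdvd_imp_le) auto
  then show False using s t assms by linarith
qed

lemma oriented_coloring_block_coloring:
  assumes "p dvd r" and "4 * b \<le> p + 1"
  shows "oriented_coloring (cycle_V r) (cycle_A r) b p (block_coloring p b)"
proof -
  have "b \<le> p" "2 * b \<le> p" using assms(2) by linarith+
  have arc: "block_coloring p b y = block_coloring p b (x + 1)" if "(x, y) \<in> cycle_A r" for x y
    using that block_coloring_mod[OF assms(1)] unfolding cycle_A_def by auto
  have disjoint: "block_coloring p b x \<inter> block_coloring p b y = {}" if "(x, y) \<in> cycle_A r" for x y
    using arc[OF that] block_coloring_adjacent_disjoint[OF \<open>2 * b \<le> p\<close>] by simp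
  have oriented: "block_coloring p b y \<inter> block_coloring p b z = {}"
    if "(x, y) \<in> cycle_A r" "(z, w) \<in> cycle_A r"
      and "block_coloring p b x \<inter> block_coloring p b w \<noteq> {}" for x y z w
    using that arc block_coloring_oriented[OF assms(2), of x z] by simp
  show ?thesis
    unfolding oriented_coloring_def
    using \<open>b \<le> p\<close> block_coloring_subset card_block_coloring disjoint oriented by fast
qed

lemma chi_star_le_coloring:
  assumes "oriented_coloring V A b k f" and "b > 0"
  shows "chi_star V A \<le> real k / real b"
proof -
  have "chi_b V A b \<le> k"
    unfolding chi_b_def using assms(1) by (intro cInf_lower) auto
  then have "real (chi_b V A b) / real b \<le> real k / real b"
    by (simp add: divide_right_mono)
  moreover have "chi_star V A \<le> real (chi_b V A b) / real b"
    unfolding chi_star_def using assms(2)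
    by (intro cINF_lower bdd_belowI[where m = 0]) auto
  ultimately show ?thesis by linarith
qed

theorem lemma9:
  fixes r :: nat
  assumes "r > 5" and "\<not> 3 dvd r" and "\<exists>p. typeA p \<and> p dvd r"
  shows "chi_star (cycle_V r) (cycle_A r) \<le> 4 - beta r"
proof -
  define p where "p = (LEAST p. typeA p \<and> p dvd r)"
  have p: "typeA p" "p dvd r"
    unfolding p_def using LeastI_ex[OF assms(3)] by auto
  have beta: "beta r = 4 / (real p + 1)"
    unfolding beta_def p_def using assms(3) by simp
  define b where "b = (p + 1) div 4"
  have "p mod 4 = 3" "p > 3" using p(1) unfolding typeA_def by auto
  then have pb: "p + 1 = 4 * b" and "b > 0" unfolding b_def by presburger+
  have "chi_star (cycle_V r) (cycle_A r) \<le> real p / real b"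
    using oriented_coloring_block_coloring[OF p(2)] pb \<open>b > 0\<close>
    by (intro chi_star_le_coloring) auto
  also have "real p / real b = 4 - beta r"
    using arg_cong[OF pb, of real] \<open>b > 0\<close> unfolding beta by (simp add: field_simps)
  finally show ?thesis .
qed

end
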